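(* Let $\mathcal S,\mathcal P\subseteq\mathcal G$ be group properties with $\mathcal P\subseteq\mathcal S$. If for every $G\in\mathcal S$ there is some $H\in\mathcal P$ such that $\overline G$ can be embedded into $\overline H$, then $\mathcal P$ is dense in $\mathcal S$.
   Context: Let $\mathbb N=\{1,2,3,\dots\}$. Equip $\mathbb N^{\mathbb N\times\mathbb N}$ with the product topology of the discrete topology on $\mathbb N$. Let $\mathcal G$ be the subspace consisting of those $A\in\mathbb N^{\mathbb N\times\mathbb N}$ that are the multiplication table of a group on the underlying set $\mathbb N$ whose identity element is $1$. For $G\in\mathcal G$, $\overline G$ denotes the group on $\mathbb N$ with multiplication table $G$. A group property is a subset $\mathcal P\subseteq\mathcal G$ invariant under isomorphism: if $G\in\mathcal G$, $H\in\mathcal P$ and $\overline G\cong\overline H$ then $G\in\mathcal P$. *)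

theory Defs
  imports "HOL-Analysis.Analysis" "HOL-Algebra.Group"
begin

definition Npos :: "nat set" where "Npos = {1..}"

text \<open>The space N^(N x N) with the product of discrete topologies
  (functions are extensional: undefined outside N x N).\<close>
definition table_space :: "(nat \<times> nat \<Rightarrow> nat) topology" where
  "table_space = product_topology (\<lambda>_. discrete_topology Npos) (Npos \<times> Npos)"

definition group_of :: "(nat \<times> nat \<Rightarrow> nat) \<Rightarrow> nat monoid" where
  "group_of A = \<lparr>carrier = Npos, mult = (\<lambda>x y. A (x, y)), one = 1\<rparr>"

definition calG :: "(nat \<times> nat \<Rightarrow> nat) set" where
  "calG = {A \<in> topspace table_space. group (group_of A)}"

definition group_property :: "(nat \<times> nat \<Rightarrow> nat) set \<Rightarrow> bool" where
  "group_property P \<longleftrightarrow> P \<subseteq> calG \<and>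
     (\<forall>G \<in> calG. \<forall>H \<in> P. group_of G \<cong> group_of H \<longrightarrow> G \<in> P)"

definition embeds_into :: "(nat \<times> nat \<Rightarrow> nat) \<Rightarrow> (nat \<times> nat \<Rightarrow> nat) \<Rightarrow> bool" where
  "embeds_into G H \<longleftrightarrow>
     (\<exists>h. h \<in> hom (group_of G) (group_of H) \<and> inj_on h (carrier (group_of G)))"

text \<open>P is dense in S, where S carries the subspace topology inherited from G
  (equivalently from the table space).\<close>
definition dense_in :: "(nat \<times> nat \<Rightarrow> nat) set \<Rightarrow> (nat \<times> nat \<Rightarrow> nat) set \<Rightarrow> bool" where
  "dense_in P S \<longleftrightarrow> S \<subseteq> (subtopology table_space S) closure_of P"

end

theory Submission
  imports Defs
begin

text \<open>Let \<open>G \<in> S\<close> embed into \<open>H \<in> P\<close> via \<open>h\<close>. A basic neighbourhood of \<open>G\<close> prescribes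
  only finitely many entries of the table, involving a finite set \<open>K\<close> of elements. Extend
  the restriction of \<open>h\<close> to \<open>K \<union> {1}\<close> (the identity must remain \<open>1\<close>) to a bijection \<open>\<tau>\<close>
  of \<open>\<nat>\<close> and pull the table of \<open>H\<close> back along \<open>\<tau>\<close>: the result is isomorphic to \<open>H\<close>, hence
  lies in \<open>P\<close>, and it agrees with \<open>G\<close> on the prescribed entries because \<open>h\<close> is a
  homomorphism.\<close>

lemma extend_inj_on_to_bij_betw:
  assumes A: "countable A" "infinite A" and B: "countable B" "infinite B"
    and K: "finite K" "K \<subseteq> A" and h: "inj_on h K" "h ` K \<subseteq> B"
  shows "\<exists>\<tau>. bij_betw \<tau> A B \<and> (\<forall>x\<in>K. \<tau> x = h x)"
proof -
  let ?A = "A - K" and ?B = "B - h ` K"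
  have "bij_betw (to_nat_on ?A) ?A UNIV"
    using A K by (intro to_nat_on_infinite) auto
  moreover have "bij_betw (from_nat_into ?B) UNIV ?B"
    using B K by (intro bij_betw_from_nat_into) auto
  ultimately have rest: "bij_betw (from_nat_into ?B \<circ> to_nat_on ?A) ?A ?B"
    by (rule bij_betw_trans)
  define \<tau> where "\<tau> x = (if x \<in> K then h x else (from_nat_into ?B \<circ> to_nat_on ?A) x)" for x
  have "bij_betw \<tau> K (h ` K)"
    using h(1) by (simp add: \<tau>_def bij_betw_def inj_on_def image_def)
  moreover have "bij_betw \<tau> ?A ?B"
    using rest by (rule bij_betw_cong[THEN iffD1, rotated]) (simp add: \<tau>_def)
  ultimately have "bij_betw \<tau> (K \<union> ?A) (h ` K \<union> ?B)"
    by (rule bij_betw_combine) auto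
  moreover have "K \<union> ?A = A" "h ` K \<union> ?B = B"
    using K h by auto
  ultimately show ?thesis
    by (auto simp: \<tau>_def)
qed

lemma infinite_Npos: "infinite Npos"
  unfolding Npos_def by (rule infinite_Ici)

definition relabel_table :: "(nat \<Rightarrow> nat) \<Rightarrow> (nat \<times> nat \<Rightarrow> nat) \<Rightarrow> nat \<times> nat \<Rightarrow> nat" where
  "relabel_table \<tau> H = (\<lambda>(x, y).
     if x \<in> Npos \<and> y \<in> Npos then inv_into Npos \<tau> (H (\<tau> x, \<tau> y)) else undefined)"

lemma relabel_table_apply:
  "x \<in> Npos \<Longrightarrow> y \<in> Npos \<Longrightarrow> relabel_table \<tau> H (x, y) = inv_into Npos \<tau> (H (\<tau> x, \<tau> y))"
  by (simp add: relabel_table_def)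

lemma inv_into_iso_relabel_table:
  assumes \<tau>: "bij_betw \<tau> Npos Npos"
  shows "inv_into Npos \<tau> \<in> iso (group_of H) (group_of (relabel_table \<tau> H))"
proof -
  let ?\<sigma> = "inv_into Npos \<tau>"
  have \<sigma>: "bij_betw ?\<sigma> Npos Npos"
    using \<tau> by (rule bij_betw_inv_into)
  have \<sigma>_Npos: "?\<sigma> x \<in> Npos" if "x \<in> Npos" for x
    using \<sigma> that by (auto simp: bij_betw_def)
  have "relabel_table \<tau> H (?\<sigma> x, ?\<sigma> y) = ?\<sigma> (H (x, y))" if "x \<in> Npos" "y \<in> Npos" for x y
    using that \<sigma>_Npos bij_betw_inv_into_right[OF \<tau>] by (simp add: relabel_table_apply)
  then show ?thesis
    using \<sigma> \<sigma>_Npos by (auto simp: iso_def hom_def group_of_def)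
qed

lemma relabel_table_in_calG:
  assumes \<tau>: "bij_betw \<tau> Npos Npos" "\<tau> 1 = 1" and H: "H \<in> calG"
  shows "relabel_table \<tau> H \<in> calG"
proof -
  have "inv_into Npos \<tau> 1 = 1"
    using \<tau> bij_betw_inv_into_left[OF \<tau>(1), of 1] by (simp add: Npos_def)
  then have "group (group_of (relabel_table \<tau> H))"
    using group.iso_imp_img_group[OF _ inv_into_iso_relabel_table[OF \<tau>(1)], of H] H
    by (simp add: calG_def group_of_def)
  moreover have "relabel_table \<tau> H \<in> topspace table_space"
  proof -
    have "H (\<tau> x, \<tau> y) \<in> \<tau> ` Npos" if "x \<in> Npos" "y \<in> Npos" for x y
      using H that \<tau>(1) monoid.m_closed[OF group.is_monoid, of "group_of H" "\<tau> x" "\<tau> y"]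
      by (auto simp: calG_def group_of_def bij_betw_def)
    then have "relabel_table \<tau> H (x, y) \<in> Npos" if "x \<in> Npos" "y \<in> Npos" for x y
      using that by (simp add: relabel_table_apply inv_into_into)
    moreover have "relabel_table \<tau> H \<in> extensional (Npos \<times> Npos)"
      by (auto simp: relabel_table_def extensional_def)
    ultimately show ?thesis
      by (auto simp: table_space_def PiE_iff)
  qed
  ultimately show ?thesis
    by (simp add: calG_def)
qed

lemma group_of_relabel_table_iso:
  assumes "bij_betw \<tau> Npos Npos" "H \<in> calG"
  shows "group_of (relabel_table \<tau> H) \<cong> group_of H"
proof -
  have "group (group_of H)"
    using assms(2) by (simp add: calG_def)
  then show ?thesis
    using group.iso_sym is_isoI[OF inv_into_iso_relabel_table[OF assms(1)]] by blast
qed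

lemma embeds_into_imp_isomorphic_table_agreeing_on_finite:
  assumes G: "G \<in> calG" and H: "H \<in> calG" and "embeds_into G H"
    and F: "finite F" "F \<subseteq> Npos \<times> Npos"
  shows "\<exists>H'\<in>calG. group_of H' \<cong> group_of H \<and> (\<forall>i\<in>F. H' i = G i)"
proof -
  obtain h where h: "h \<in> hom (group_of G) (group_of H)" and inj: "inj_on h Npos"
    using \<open>embeds_into G H\<close> by (auto simp: embeds_into_def group_of_def)
  have "group_hom (group_of G) (group_of H) h"
    using G H h by (simp add: group_hom_def group_hom_axioms_def calG_def)
  then have h_one: "h 1 = 1"
    using group_hom.hom_one by (fastforce simp: group_of_def)
  have h_Npos: "h x \<in> Npos" if "x \<in> Npos" for x
    using h that by (auto simp: hom_def group_of_def)
  have h_mult: "h (G (x, y)) = H (h x, h y)" if "x \<in> Npos" "y \<in> Npos" for x y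
    using h that by (auto simp: hom_def group_of_def)
  have G_closed: "G (x, y) \<in> Npos" if "x \<in> Npos" "y \<in> Npos" for x y
    using G that monoid.m_closed[OF group.is_monoid, of "group_of G" x y]
    by (simp add: calG_def group_of_def)
  define K where "K = insert 1 (fst ` F \<union> snd ` F \<union> G ` F)"
  have K: "finite K" "K \<subseteq> Npos"
    using F G_closed by (auto simp: K_def Npos_def)
  have Npos: "countable Npos" "infinite Npos"
    by (simp_all add: infinite_Npos)
  obtain \<tau> where \<tau>: "bij_betw \<tau> Npos Npos" and \<tau>_K: "\<forall>x\<in>K. \<tau> x = h x"
    using extend_inj_on_to_bij_betw[OF Npos Npos K inj_on_subset[OF inj K(2)]] h_Npos K(2)
    by blast
  have "\<tau> 1 = 1"
    using \<tau>_K h_one by (simp add: K_def)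
  have "relabel_table \<tau> H (a, b) = G (a, b)" if "(a, b) \<in> F" for a b
  proof -
    have in_K: "a \<in> K" "b \<in> K" "G (a, b) \<in> K"
      using that by (force simp: K_def)+
    then have in_Npos: "a \<in> Npos" "b \<in> Npos"
      using K(2) by auto
    have "relabel_table \<tau> H (a, b) = inv_into Npos \<tau> (H (h a, h b))"
      using in_K in_Npos \<tau>_K by (simp add: relabel_table_apply)
    also have "\<dots> = inv_into Npos \<tau> (\<tau> (G (a, b)))"
      using in_K in_Npos \<tau>_K h_mult by simp
    also have "\<dots> = G (a, b)"
      using \<tau> G_closed in_Npos by (simp add: bij_betw_inv_into_left)
    finally show ?thesis .
  qed
  then have "\<forall>i\<in>F. relabel_table \<tau> H i = G i"
    by auto
  then show ?thesis
    using relabel_table_in_calG[OF \<tau> \<open>\<tau> 1 = 1\<close> H] group_of_relabel_table_iso[OF \<tau> H]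
    by blast
qed

lemma dense_in_if_approximable_on_finite:
  assumes "P \<subseteq> S" "S \<subseteq> topspace table_space"
    and approx: "\<And>G F. G \<in> S \<Longrightarrow> finite F \<Longrightarrow> F \<subseteq> Npos \<times> Npos \<Longrightarrow> \<exists>H\<in>P. \<forall>i\<in>F. H i = G i"
  shows "dense_in P S"
  unfolding dense_in_def
proof
  fix G assume "G \<in> S"
  show "G \<in> subtopology table_space S closure_of P"
    unfolding in_closure_of
  proof (intro conjI allI impI)
    show "G \<in> topspace (subtopology table_space S)"
      using \<open>G \<in> S\<close> assms(2) by auto
  next
    fix T assume "G \<in> T \<and> openin (subtopology table_space S) T"
    then obtain U where U: "openin table_space U" "G \<in> U" and T: "T = U \<inter> S"
      by (auto simp: openin_subtopology)
    then obtain V where V: "finite {i \<in> Npos \<times> Npos. V i \<noteq> Npos}"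
      and G_V: "G \<in> PiE (Npos \<times> Npos) V" and V_U: "PiE (Npos \<times> Npos) V \<subseteq> U"
      unfolding table_space_def openin_product_topology_alt by auto
    obtain H where "H \<in> P" and agree: "\<forall>i\<in>{i \<in> Npos \<times> Npos. V i \<noteq> Npos}. H i = G i"
      using approx[OF \<open>G \<in> S\<close> V] by blast
    have "H \<in> topspace table_space"
      using \<open>H \<in> P\<close> assms(1,2) by blast
    then have H_Npos: "H i \<in> Npos" if "i \<in> Npos \<times> Npos" for i
      using that by (auto simp: table_space_def)
    have "H \<in> PiE (Npos \<times> Npos) V"
    proof (rule PiE_I)
      fix i assume i: "i \<in> Npos \<times> Npos"
      show "H i \<in> V i"
      proof (cases "V i = Npos")
        case True
        then show ?thesis using H_Npos[OF i] by simp
      next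
        case False
        then have "H i = G i" using agree i by blast
        then show ?thesis using G_V i by auto
      qed
    next
      fix i assume "i \<notin> Npos \<times> Npos"
      then show "H i = undefined"
        using \<open>H \<in> topspace table_space\<close> by (auto simp: table_space_def)
    qed
    then show "\<exists>H. H \<in> P \<and> H \<in> T"
      using \<open>H \<in> P\<close> V_U T assms(1) by blast
  qed
qed

theorem lemma4p3:
  assumes "group_property S" and "group_property P" and "P \<subseteq> S"
    and "\<forall>G \<in> S. \<exists>H \<in> P. embeds_into G H"
  shows "dense_in P S"
proof (rule dense_in_if_approximable_on_finite)
  have S_calG: "S \<subseteq> calG" and P_calG: "P \<subseteq> calG"
    using assms(1,2) by (auto simp: group_property_def)
  then show "S \<subseteq> topspace table_space"
    by (auto simp: calG_def)
  fix G F assume "G \<in> S" "finite F" "F \<subseteq> Npos \<times> Npos"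
  then obtain H where "H \<in> P" "embeds_into G H"
    using assms(4) by blast
  moreover have "G \<in> calG" "H \<in> calG"
    using \<open>G \<in> S\<close> \<open>H \<in> P\<close> S_calG P_calG by auto
  ultimately obtain H' where "H' \<in> calG" "group_of H' \<cong> group_of H" "\<forall>i\<in>F. H' i = G i"
    using embeds_into_imp_isomorphic_table_agreeing_on_finite \<open>finite F\<close> \<open>F \<subseteq> Npos \<times> Npos\<close>
    by blast
  moreover have "H' \<in> P"
    using assms(2) \<open>H \<in> P\<close> calculation(1,2) unfolding group_property_def by blast
  ultimately show "\<exists>H\<in>P. \<forall>i\<in>F. H i = G i"
    by blast
qed (use assms(3) in auto)

end
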